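(* Let $R$ be a ring and $J\subseteq J(R)$ an ideal of $R$ such that idempotents lift modulo $J$. Then the following are equivalent: (1) $R$ is an abelian ring; (2) $R/J$ is an abelian ring and idempotents lift uniquely modulo $J$.
   Context: All rings are associative with identity; $J(R)$ is the Jacobson radical. A ring is abelian if all its idempotents are central. Idempotents lift modulo an ideal $J$ if for every $a\in R$ with $a^2-a\in J$ there exists an idempotent $e\in R$ with $e-a\in J$; they lift uniquely modulo $J$ if this idempotent $e$ is uniquely determined by $a$. *)

theory Defs
  imports "HOL-Algebra.Algebra"
begin

definition idem :: "('a, 'b) ring_scheme \<Rightarrow> 'a \<Rightarrow> bool" where
  "idem R e \<longleftrightarrow> e \<in> carrier R \<and> e \<otimes>\<^bsub>R\<^esub> e = e"

definition abelian_ring :: "('a, 'b) ring_scheme \<Rightarrow> bool" where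
  "abelian_ring R \<longleftrightarrow> (\<forall>e. idem R e \<longrightarrow> (\<forall>x\<in>carrier R. e \<otimes>\<^bsub>R\<^esub> x = x \<otimes>\<^bsub>R\<^esub> e))"

definition left_ideal :: "'a set \<Rightarrow> ('a, 'b) ring_scheme \<Rightarrow> bool" where
  "left_ideal I R \<longleftrightarrow> additive_subgroup I R \<and>
     (\<forall>r\<in>carrier R. \<forall>x\<in>I. r \<otimes>\<^bsub>R\<^esub> x \<in> I)"

definition maximal_left_ideal :: "'a set \<Rightarrow> ('a, 'b) ring_scheme \<Rightarrow> bool" where
  "maximal_left_ideal I R \<longleftrightarrow> left_ideal I R \<and> I \<noteq> carrier R \<and>
     (\<forall>K. left_ideal K R \<and> I \<subseteq> K \<longrightarrow> K = I \<or> K = carrier R)"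

definition jacobson :: "('a, 'b) ring_scheme \<Rightarrow> 'a set" where
  "jacobson R = carrier R \<inter> \<Inter> {I. maximal_left_ideal I R}"

definition idempotents_lift :: "('a, 'b) ring_scheme \<Rightarrow> 'a set \<Rightarrow> bool" where
  "idempotents_lift R J \<longleftrightarrow> (\<forall>a\<in>carrier R. a \<otimes>\<^bsub>R\<^esub> a \<ominus>\<^bsub>R\<^esub> a \<in> J \<longrightarrow>
     (\<exists>e. idem R e \<and> e \<ominus>\<^bsub>R\<^esub> a \<in> J))"

definition idempotents_lift_uniquely :: "('a, 'b) ring_scheme \<Rightarrow> 'a set \<Rightarrow> bool" where
  "idempotents_lift_uniquely R J \<longleftrightarrow> (\<forall>a\<in>carrier R. a \<otimes>\<^bsub>R\<^esub> a \<ominus>\<^bsub>R\<^esub> a \<in> J \<longrightarrow>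
     (\<exists>!e. idem R e \<and> e \<ominus>\<^bsub>R\<^esub> a \<in> J))"

end

theory Submission
  imports Defs
begin

text \<open>
  If \<open>R\<close> is abelian, the idempotents of \<open>R/J\<close> lift to central idempotents, so \<open>R/J\<close> is
  abelian; and two central idempotents \<open>e\<close>, \<open>f\<close> lifting the same class give the idempotent
  \<open>e(1 - f) = e(e - f)\<close> in the Jacobson radical, which must vanish since \<open>1 - g\<close> is left
  invertible for \<open>g\<close> in the radical; hence \<open>e = ef = fe = f\<close>.

  Conversely, let \<open>e\<close> be idempotent and \<open>x\<close> arbitrary. Since \<open>e\<close> commutes with \<open>x\<close> modulo \<open>J\<close>,
  the Peirce corners \<open>n = ex(1 - e)\<close> and \<open>(1 - e)xe\<close> lie in \<open>J\<close>; each \<open>e + n\<close> is again an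
  idempotent lifting the class of \<open>e\<close>, so uniqueness of lifts forces \<open>n = 0\<close>, whence
  \<open>ex = exe = xe\<close>.
\<close>

lemma (in ring) idem_mult_one_minus:
  assumes "idem R e" shows "e \<otimes> (\<one> \<ominus> e) = \<zero>"
  using assms by (simp add: idem_def minus_eq r_distr r_minus r_neg)

lemma (in ring) one_minus_idem_mult:
  assumes "idem R e" shows "(\<one> \<ominus> e) \<otimes> e = \<zero>"
  using assms by (simp add: idem_def minus_eq l_distr l_minus r_neg)

lemma (in ring) idem_one_minus:
  assumes "idem R e" shows "idem R (\<one> \<ominus> e)"
proof -
  have ec: "e \<in> carrier R" using assms by (simp add: idem_def)
  then have "(\<one> \<ominus> e) \<otimes> (\<one> \<ominus> e) = (\<one> \<ominus> e) \<ominus> (\<one> \<ominus> e) \<otimes> e"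
    by (simp add: minus_eq r_distr r_minus)
  also have "\<dots> = \<one> \<ominus> e"
    using ec one_minus_idem_mult[OF assms] by (simp add: minus_eq)
  finally show ?thesis using ec by (simp add: idem_def)
qed

lemma (in ring) idem_add_off_diagonal:
  assumes e: "idem R e" and n: "n \<in> carrier R"
    and en: "e \<otimes> n = n \<and> n \<otimes> e = \<zero> \<or> e \<otimes> n = \<zero> \<and> n \<otimes> e = n"
  shows "idem R (e \<oplus> n)"
proof -
  have ec: "e \<in> carrier R" and ee: "e \<otimes> e = e" using e by (auto simp: idem_def)
  have "(n \<otimes> e) \<otimes> n = n \<otimes> (e \<otimes> n)" using ec n by (simp add: m_assoc)
  then have nn: "n \<otimes> n = \<zero>" using en n by auto
  have "(e \<oplus> n) \<otimes> (e \<oplus> n) = e \<otimes> e \<oplus> (e \<otimes> n \<oplus> n \<otimes> e) \<oplus> n \<otimes> n"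
    using ec n by (simp add: l_distr r_distr a_ac)
  also have "\<dots> = e \<oplus> n" using ee en nn ec n by auto
  finally show ?thesis using ec n by (simp add: idem_def)
qed

lemma (in ring) idem_add_corners:
  assumes e: "idem R e" and x: "x \<in> carrier R"
  shows "idem R (e \<oplus> e \<otimes> x \<otimes> (\<one> \<ominus> e))" and "idem R (e \<oplus> (\<one> \<ominus> e) \<otimes> x \<otimes> e)"
proof -
  have ec: "e \<in> carrier R" and ee: "e \<otimes> e = e" using e by (auto simp: idem_def)
  have e_absorb: "e \<otimes> (e \<otimes> y) = e \<otimes> y" if "y \<in> carrier R" for y
    using ec ee that by (simp add: m_assoc[symmetric])
  have e_kills: "e \<otimes> ((\<one> \<ominus> e) \<otimes> y) = \<zero>" if "y \<in> carrier R" for y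
    using ec that by (simp add: m_assoc[symmetric] idem_mult_one_minus[OF e])
  show "idem R (e \<oplus> e \<otimes> x \<otimes> (\<one> \<ominus> e))"
    using ec x by (intro idem_add_off_diagonal[OF e])
      (simp_all add: m_assoc e_absorb one_minus_idem_mult[OF e])
  show "idem R (e \<oplus> (\<one> \<ominus> e) \<otimes> x \<otimes> e)"
    using ec x by (intro idem_add_off_diagonal[OF e])
      (simp_all add: m_assoc e_kills ee)
qed

lemma (in ring) idem_commute_if_corners_zero:
  assumes e: "idem R e" and x: "x \<in> carrier R"
    and upper: "e \<otimes> x \<otimes> (\<one> \<ominus> e) = \<zero>" and lower: "(\<one> \<ominus> e) \<otimes> x \<otimes> e = \<zero>"
  shows "e \<otimes> x = x \<otimes> e"
proof -
  have ec: "e \<in> carrier R" using e by (simp add: idem_def)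
  have "e \<otimes> x \<ominus> e \<otimes> x \<otimes> e = e \<otimes> x \<otimes> (\<one> \<ominus> e)"
    using ec x by (simp add: minus_eq r_distr r_minus)
  also have "\<dots> = \<zero>" by (rule upper)
  finally have left: "e \<otimes> x = e \<otimes> x \<otimes> e" using ec x by simp
  have "x \<otimes> e \<ominus> e \<otimes> x \<otimes> e = (\<one> \<ominus> e) \<otimes> x \<otimes> e"
    using ec x by (simp add: minus_eq l_distr l_minus)
  also have "\<dots> = \<zero>" by (rule lower)
  finally have right: "x \<otimes> e = e \<otimes> x \<otimes> e" using ec x by simp
  show ?thesis using left right by simp
qed

lemma (in ring) left_ideal_chain_Union:
  assumes "subset.chain {K. left_ideal K R} C" and "C \<noteq> {}"
  shows "left_ideal (\<Union>C) R"
proof -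
  have ideals: "\<And>K. K \<in> C \<Longrightarrow> left_ideal K R"
    and ch: "\<And>K L. K \<in> C \<Longrightarrow> L \<in> C \<Longrightarrow> K \<subseteq> L \<or> L \<subseteq> K"
    using assms(1) unfolding pred_on.chain_def by blast+
  have sg: "\<And>K. K \<in> C \<Longrightarrow> additive_subgroup K R"
    and mult: "\<And>K. K \<in> C \<Longrightarrow> \<forall>r\<in>carrier R. \<forall>x\<in>K. r \<otimes> x \<in> K"
    using ideals unfolding left_ideal_def by blast+
  have "subgroup (\<Union>C) (add_monoid R)"
  proof
    show "\<Union>C \<subseteq> carrier (add_monoid R)"
      using sg additive_subgroup.a_subset by fastforce
    obtain K where "K \<in> C" using assms(2) by blast
    then show "\<one>\<^bsub>add_monoid R\<^esub> \<in> \<Union>C"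
      using sg additive_subgroup.zero_closed by fastforce
  next
    fix x y assume "x \<in> \<Union>C" "y \<in> \<Union>C"
    then obtain K L where KL: "K \<in> C" "L \<in> C" "x \<in> K" "y \<in> L" by blast
    have M: "K \<union> L \<in> C"
      using ch[OF KL(1,2)] KL(1,2) by (elim disjE) (simp_all add: Un_absorb1 Un_absorb2)
    have "x \<in> K \<union> L" and "y \<in> K \<union> L" using KL by auto
    then have "x \<oplus> y \<in> K \<union> L" and "\<ominus> x \<in> K \<union> L"
      using additive_subgroup.a_closed[OF sg[OF M]] additive_subgroup.a_inv_closed[OF sg[OF M]]
      by auto
    then show "x \<otimes>\<^bsub>add_monoid R\<^esub> y \<in> \<Union>C" and "inv\<^bsub>add_monoid R\<^esub> x \<in> \<Union>C"
      using M unfolding a_inv_def by auto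
  qed
  then have "additive_subgroup (\<Union>C) R" by (rule additive_subgroupI)
  then show ?thesis using mult unfolding left_ideal_def by blast
qed

lemma (in ring) left_ideal_one_imp_carrier:
  assumes "left_ideal K R" and "\<one> \<in> K"
  shows "K = carrier R"
proof
  show "K \<subseteq> carrier R"
    using assms(1) additive_subgroup.a_subset unfolding left_ideal_def by blast
  show "carrier R \<subseteq> K"
  proof
    fix r assume "r \<in> carrier R"
    then have "r \<otimes> \<one> \<in> K" using assms unfolding left_ideal_def by blast
    then show "r \<in> K" using \<open>r \<in> carrier R\<close> by simp
  qed
qed

lemma (in ring) left_ideal_left_multiples:
  assumes a: "a \<in> carrier R"
  shows "left_ideal {r \<otimes> a | r. r \<in> carrier R} R"
proof -
  let ?L = "{r \<otimes> a | r. r \<in> carrier R}"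
  have "subgroup ?L (add_monoid R)"
  proof
    show "?L \<subseteq> carrier (add_monoid R)" using a by auto
    have "\<zero> = \<zero> \<otimes> a" using a by simp
    then show "\<one>\<^bsub>add_monoid R\<^esub> \<in> ?L" by force
  next
    fix x y assume "x \<in> ?L" "y \<in> ?L"
    then obtain r s where rs: "r \<in> carrier R" "s \<in> carrier R" "x = r \<otimes> a" "y = s \<otimes> a" by blast
    then have "x \<oplus> y = (r \<oplus> s) \<otimes> a" and "\<ominus> x = (\<ominus> r) \<otimes> a"
      using a by (simp_all add: l_distr l_minus)
    then show "x \<otimes>\<^bsub>add_monoid R\<^esub> y \<in> ?L" and "inv\<^bsub>add_monoid R\<^esub> x \<in> ?L"
      using rs unfolding a_inv_def[symmetric] by force+
  qed
  moreover have "\<forall>s\<in>carrier R. \<forall>x\<in>?L. s \<otimes> x \<in> ?L"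
    using a by (force simp: m_assoc[symmetric])
  ultimately show ?thesis unfolding left_ideal_def by (blast intro: additive_subgroupI)
qed

lemma (in ring) left_ideal_imp_subset_maximal:
  assumes "left_ideal L R" and "\<one> \<notin> L"
  shows "\<exists>M. maximal_left_ideal M R \<and> L \<subseteq> M"
proof -
  define A where "A = {K. left_ideal K R \<and> L \<subseteq> K \<and> \<one> \<notin> K}"
  have "\<exists>M\<in>A. \<forall>K\<in>A. M \<subseteq> K \<longrightarrow> K = M"
  proof (rule subset_Zorn_nonempty)
    show "A \<noteq> {}" using assms unfolding A_def by blast
  next
    fix C assume ne: "C \<noteq> {}" and ch: "subset.chain A C"
    then have "C \<subseteq> A" and "subset.chain {K. left_ideal K R} C"
      by (auto simp: A_def pred_on.chain_def)
    then show "\<Union>C \<in> A"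
      using left_ideal_chain_Union ne unfolding A_def by blast
  qed
  then obtain M where M: "M \<in> A" and max: "\<forall>K\<in>A. M \<subseteq> K \<longrightarrow> K = M" by blast
  have "maximal_left_ideal M R"
    unfolding maximal_left_ideal_def
  proof (intro conjI allI impI)
    show "left_ideal M R" and "M \<noteq> carrier R" using M unfolding A_def by auto
    fix K assume "left_ideal K R \<and> M \<subseteq> K"
    then show "K = M \<or> K = carrier R"
      using max M left_ideal_one_imp_carrier unfolding A_def by blast
  qed
  then show ?thesis using M unfolding A_def by blast
qed

lemma (in ring) jacobson_one_minus_left_invertible:
  assumes x: "x \<in> jacobson R"
  shows "\<exists>r\<in>carrier R. r \<otimes> (\<one> \<ominus> x) = \<one>"
proof (rule ccontr)
  assume no_inverse: "\<not> ?thesis"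
  have xc: "x \<in> carrier R" using x unfolding jacobson_def by blast
  define L where "L = {r \<otimes> (\<one> \<ominus> x) | r. r \<in> carrier R}"
  have "left_ideal L R" unfolding L_def using xc by (simp add: left_ideal_left_multiples)
  moreover have "\<one> \<notin> L" using no_inverse unfolding L_def by auto
  ultimately obtain M where M: "maximal_left_ideal M R" and LM: "L \<subseteq> M"
    using left_ideal_imp_subset_maximal by blast
  have M_left_ideal: "left_ideal M R" using M unfolding maximal_left_ideal_def by blast
  then have M_subgroup: "additive_subgroup M R" unfolding left_ideal_def by blast
  have "\<one> \<ominus> x = \<one> \<otimes> (\<one> \<ominus> x)" using xc by simp
  then have "\<one> \<ominus> x \<in> M" using LM unfolding L_def by blast
  moreover have "x \<in> M" using x M unfolding jacobson_def by blast
  ultimately have "(\<one> \<ominus> x) \<oplus> x \<in> M" by (rule additive_subgroup.a_closed[OF M_subgroup])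
  moreover have "(\<one> \<ominus> x) \<oplus> x = \<one>" using xc by (simp add: minus_eq a_assoc l_neg)
  ultimately have "M = carrier R" using left_ideal_one_imp_carrier[OF M_left_ideal] by simp
  then show False using M unfolding maximal_left_ideal_def by blast
qed

lemma (in ring) idem_in_jacobson_eq_zero:
  assumes g: "idem R g" and gJ: "g \<in> jacobson R"
  shows "g = \<zero>"
proof -
  have gc: "g \<in> carrier R" using g by (simp add: idem_def)
  obtain r where r: "r \<in> carrier R" "r \<otimes> (\<one> \<ominus> g) = \<one>"
    using jacobson_one_minus_left_invertible[OF gJ] by blast
  have "g = (r \<otimes> (\<one> \<ominus> g)) \<otimes> g" using r gc by simp
  also have "\<dots> = r \<otimes> ((\<one> \<ominus> g) \<otimes> g)" using r(1) gc by (simp add: m_assoc)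
  also have "\<dots> = \<zero>" using r by (simp add: one_minus_idem_mult[OF g])
  finally show ?thesis .
qed

lemma (in ring) jacobson_l_closed:
  assumes "r \<in> carrier R" and "x \<in> jacobson R"
  shows "r \<otimes> x \<in> jacobson R"
  using assms unfolding jacobson_def maximal_left_ideal_def left_ideal_def by blast

lemma (in ring) abelian_idem_mult_eq_if_diff_in_jacobson:
  assumes ab: "abelian_ring R" and e: "idem R e" and f: "idem R f"
    and ef: "e \<ominus> f \<in> jacobson R"
  shows "e \<otimes> f = e"
proof -
  have ec: "e \<in> carrier R" and ee: "e \<otimes> e = e" using e by (auto simp: idem_def)
  have fc: "f \<in> carrier R" using f by (simp add: idem_def)
  define g where "g = e \<otimes> (\<one> \<ominus> f)"
  have "\<one> \<ominus> f \<in> carrier R" using fc by simp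
  then have central: "e \<otimes> (\<one> \<ominus> f) = (\<one> \<ominus> f) \<otimes> e"
    using ab e unfolding abelian_ring_def by blast
  have "g \<otimes> g = e \<otimes> ((\<one> \<ominus> f) \<otimes> e) \<otimes> (\<one> \<ominus> f)"
    unfolding g_def using ec fc by (simp add: m_assoc)
  also have "\<dots> = e \<otimes> (e \<otimes> (\<one> \<ominus> f)) \<otimes> (\<one> \<ominus> f)" by (simp only: central[symmetric])
  also have "\<dots> = (e \<otimes> e) \<otimes> ((\<one> \<ominus> f) \<otimes> (\<one> \<ominus> f))"
    using ec fc by (simp add: m_assoc)
  also have "\<dots> = g"
    unfolding g_def using ee idem_one_minus[OF f] by (simp add: idem_def)
  finally have "idem R g" unfolding idem_def g_def using ec fc by simp
  moreover have "g = e \<otimes> (e \<ominus> f)"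
    unfolding g_def using ec fc ee by (simp add: minus_eq r_distr r_minus)
  then have "g \<in> jacobson R" using jacobson_l_closed[OF ec ef] by simp
  ultimately have "g = \<zero>" by (rule idem_in_jacobson_eq_zero)
  moreover have "g = e \<ominus> e \<otimes> f"
    unfolding g_def using ec fc by (simp add: minus_eq r_distr r_minus)
  ultimately show ?thesis using ec fc by simp
qed

lemma (in ring) abelian_idem_eq_if_diff_in_jacobson:
  assumes ab: "abelian_ring R" and e: "idem R e" and f: "idem R f"
    and ef: "e \<ominus> f \<in> jacobson R"
  shows "e = f"
proof -
  have ec: "e \<in> carrier R" and fc: "f \<in> carrier R" using e f by (auto simp: idem_def)
  have "f \<ominus> e = (\<ominus> \<one>) \<otimes> (e \<ominus> f)" using ec fc by algebra
  then have fe: "f \<ominus> e \<in> jacobson R" using jacobson_l_closed[OF _ ef] by simp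
  have "e = e \<otimes> f" using abelian_idem_mult_eq_if_diff_in_jacobson[OF ab e f ef] by simp
  also have "\<dots> = f \<otimes> e" using ab e fc unfolding abelian_ring_def by blast
  also have "\<dots> = f" using abelian_idem_mult_eq_if_diff_in_jacobson[OF ab f e fe] .
  finally show ?thesis .
qed

lemma (in ideal) Quot_carrier_iff:
  "W \<in> carrier (R Quot I) \<longleftrightarrow> (\<exists>a\<in>carrier R. W = I +> a)"
  unfolding FactRing_def A_RCOSETS_def' by auto

lemma (in ideal) Quot_mult_rcos:
  assumes "a \<in> carrier R" and "b \<in> carrier R"
  shows "(I +> a) \<otimes>\<^bsub>R Quot I\<^esub> (I +> b) = I +> (a \<otimes> b)"
  using rcoset_mult_add[OF assms] unfolding FactRing_def by simp

lemma (in ideal) idem_Quot_rcos_iff: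
  assumes "a \<in> carrier R"
  shows "idem (R Quot I) (I +> a) \<longleftrightarrow> a \<otimes> a \<ominus> a \<in> I"
  using assms quotient_eq_iff_same_a_r_cos[OF ideal_axioms]
  by (auto simp: idem_def Quot_carrier_iff Quot_mult_rcos)

lemma (in ideal) Quot_rcos_commute_iff:
  assumes "a \<in> carrier R" and "b \<in> carrier R"
  shows "(I +> a) \<otimes>\<^bsub>R Quot I\<^esub> (I +> b) = (I +> b) \<otimes>\<^bsub>R Quot I\<^esub> (I +> a)
    \<longleftrightarrow> a \<otimes> b \<ominus> b \<otimes> a \<in> I"
  using assms quotient_eq_iff_same_a_r_cos[OF ideal_axioms] by (simp add: Quot_mult_rcos)

lemma (in ideal) abelian_ring_Quot_if_abelian_ring:
  assumes lift: "idempotents_lift R I" and ab: "abelian_ring R"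
  shows "abelian_ring (R Quot I)"
  unfolding abelian_ring_def
proof (intro allI impI ballI)
  fix E Y assume E: "idem (R Quot I) E" and Y: "Y \<in> carrier (R Quot I)"
  obtain a where a: "a \<in> carrier R" "E = I +> a"
    using E unfolding idem_def Quot_carrier_iff by blast
  obtain b where b: "b \<in> carrier R" "Y = I +> b" using Y unfolding Quot_carrier_iff by blast
  have "a \<otimes> a \<ominus> a \<in> I" using E a idem_Quot_rcos_iff by simp
  then obtain f where f: "idem R f" "f \<ominus> a \<in> I"
    using lift a unfolding idempotents_lift_def by blast
  have fc: "f \<in> carrier R" using f by (simp add: idem_def)
  have "E = I +> f" using a f quotient_eq_iff_same_a_r_cos[OF ideal_axioms fc a(1)] by simp
  moreover have "f \<otimes> b = b \<otimes> f" using ab f b unfolding abelian_ring_def by blast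
  ultimately show "E \<otimes>\<^bsub>R Quot I\<^esub> Y = Y \<otimes>\<^bsub>R Quot I\<^esub> E"
    using b fc by (simp add: Quot_mult_rcos)
qed

lemma (in ideal) idempotents_lift_uniquely_if_abelian_ring:
  assumes IJ: "I \<subseteq> jacobson R" and lift: "idempotents_lift R I" and ab: "abelian_ring R"
  shows "idempotents_lift_uniquely R I"
  unfolding idempotents_lift_uniquely_def
proof (intro ballI impI)
  fix a assume a: "a \<in> carrier R" "a \<otimes> a \<ominus> a \<in> I"
  then obtain e where e: "idem R e" "e \<ominus> a \<in> I" using lift unfolding idempotents_lift_def by blast
  have "f = e" if f: "idem R f" "f \<ominus> a \<in> I" for f
  proof -
    have "e \<in> carrier R" and "f \<in> carrier R" using e f by (auto simp: idem_def)
    then have "f \<ominus> e = (f \<ominus> a) \<ominus> (e \<ominus> a)" using a by algebra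
    also have "\<dots> \<in> I" using e f by (simp add: minus_eq)
    finally show "f = e" using abelian_idem_eq_if_diff_in_jacobson ab f e IJ by blast
  qed
  then show "\<exists>!e. idem R e \<and> e \<ominus> a \<in> I" using e by blast
qed

lemma (in ideal) unique_lift_idem_add_eq_zero:
  assumes uniq: "idempotents_lift_uniquely R I" and e: "idem R e"
    and n: "n \<in> I" and en: "idem R (e \<oplus> n)"
  shows "n = \<zero>"
proof -
  have ec: "e \<in> carrier R" and ee: "e \<otimes> e = e" using e by (auto simp: idem_def)
  have nc: "n \<in> carrier R" using n by (rule Icarr)
  have "e \<ominus> e \<in> I" and "e \<otimes> e \<ominus> e \<in> I"
    using ec ee additive_subgroup.zero_closed[OF is_additive_subgroup] by (simp_all add: minus_eq r_neg)
  then have "\<exists>!y. idem R y \<and> y \<ominus> e \<in> I"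
    using uniq ec unfolding idempotents_lift_uniquely_def by blast
  moreover have "(e \<oplus> n) \<ominus> e = n" using ec nc by algebra
  ultimately have "e \<oplus> n = e" using e en n \<open>e \<ominus> e \<in> I\<close> by auto
  then show ?thesis using add.l_cancel_one[OF ec nc] by simp
qed

lemma (in ideal) abelian_ring_if_abelian_ring_Quot:
  assumes abq: "abelian_ring (R Quot I)" and uniq: "idempotents_lift_uniquely R I"
  shows "abelian_ring R"
  unfolding abelian_ring_def
proof (intro allI impI ballI)
  fix e x assume e: "idem R e" and x: "x \<in> carrier R"
  have ec: "e \<in> carrier R" and ee: "e \<otimes> e = e" using e by (auto simp: idem_def)
  have "idem (R Quot I) (I +> e)"
    using ec ee additive_subgroup.zero_closed[OF is_additive_subgroup]
    by (simp add: idem_Quot_rcos_iff minus_eq r_neg)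
  moreover have "I +> x \<in> carrier (R Quot I)" using x Quot_carrier_iff by blast
  ultimately have comm: "(I +> e) \<otimes>\<^bsub>R Quot I\<^esub> (I +> x) = (I +> x) \<otimes>\<^bsub>R Quot I\<^esub> (I +> e)"
    using abq unfolding abelian_ring_def by blast
  have ex: "e \<otimes> x \<ominus> x \<otimes> e \<in> I" using comm Quot_rcos_commute_iff[OF ec x] by simp
  have xe: "x \<otimes> e \<ominus> e \<otimes> x \<in> I" using comm[symmetric] Quot_rcos_commute_iff[OF x ec] by simp
  have "e \<otimes> x \<otimes> (\<one> \<ominus> e) = (e \<otimes> x \<ominus> x \<otimes> e) \<otimes> (\<one> \<ominus> e)"
    using ec x idem_mult_one_minus[OF e] by (simp add: minus_eq l_distr l_minus m_assoc)
  then have "e \<otimes> x \<otimes> (\<one> \<ominus> e) \<in> I" using ex ec by (simp add: I_r_closed)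
  then have upper: "e \<otimes> x \<otimes> (\<one> \<ominus> e) = \<zero>"
    using unique_lift_idem_add_eq_zero[OF uniq e] idem_add_corners(1)[OF e x] by blast
  have "(\<one> \<ominus> e) \<otimes> (e \<otimes> x) = \<zero>"
    using ec x one_minus_idem_mult[OF e] by (simp add: m_assoc[symmetric])
  then have "(\<one> \<ominus> e) \<otimes> x \<otimes> e = (\<one> \<ominus> e) \<otimes> (x \<otimes> e \<ominus> e \<otimes> x)"
    using ec x by (simp add: minus_eq r_distr r_minus m_assoc)
  then have "(\<one> \<ominus> e) \<otimes> x \<otimes> e \<in> I" using xe ec by (simp add: I_l_closed)
  then have lower: "(\<one> \<ominus> e) \<otimes> x \<otimes> e = \<zero>"
    using unique_lift_idem_add_eq_zero[OF uniq e] idem_add_corners(2)[OF e x] by blast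
  show "e \<otimes> x = x \<otimes> e" using idem_commute_if_corners_zero[OF e x upper lower] .
qed

theorem lemma2p9:
  fixes R (structure) and J :: "'a set"
  assumes "ring R" and "ideal J R" and "J \<subseteq> jacobson R"
    and "idempotents_lift R J"
  shows "abelian_ring R \<longleftrightarrow> abelian_ring (R Quot J) \<and> idempotents_lift_uniquely R J"
proof -
  interpret ideal J R by (rule assms(2))
  show ?thesis
    using abelian_ring_Quot_if_abelian_ring[OF assms(4)]
      idempotents_lift_uniquely_if_abelian_ring[OF assms(3,4)]
      abelian_ring_if_abelian_ring_Quot
    by blast
qed

end
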